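(* For integers $n\geq 3$, $p\geq 2$ and $m \geq 1$, $\chi_\rho(FSSD_m(K_n\star P_p)) = n+3$.
   Context: All graphs are finite and simple. For a positive integer $i$, an $i$-packing in a graph is a set of vertices any two distinct members of which are at distance greater than $i$. The packing chromatic number $\chi_\rho(H)$ is the smallest $k$ such that $V(H)$ can be partitioned into sets $V_1,\dots,V_k$ with each $V_i$ an $i$-packing. For a positive integer $m$, $FSSD_m(G)$ is obtained from $G$ by replacing each edge $xy$ by a copy of $K_{2,m}$: the edge $xy$ is deleted and $m$ new vertices are added, each adjacent to exactly $x$ and $y$. The neighborhood corona $G\star H$ of graphs $G$ (with vertices $w_1,\dots,w_{n}$) and $H$ consists of one copy of $G$ and $n$ copies $H_1,\dots,H_n$ of $H$ (each retaining the edges of $H$), where every vertex of $H_i$ is additionally joined to every neighbor of $w_i$ in $G$. $K_n$ is the complete graph and $P_p$ the path on $p$ vertices. *)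

theory Defs
  imports Main
begin

text \<open>A finite simple graph is represented as a pair (V, E) of a vertex set and a
set of edges, each edge being a 2-element subset of V.\<close>

type_synonym 'a graph = "'a set \<times> 'a set set"

definition verts :: "'a graph \<Rightarrow> 'a set" where "verts G = fst G"
definition edges :: "'a graph \<Rightarrow> 'a set set" where "edges G = snd G"

definition walk :: "'a graph \<Rightarrow> 'a list \<Rightarrow> bool" where
  "walk G xs \<longleftrightarrow> xs \<noteq> [] \<and> set xs \<subseteq> verts G \<and>
     (\<forall>k. Suc k < length xs \<longrightarrow> {xs ! k, xs ! Suc k} \<in> edges G)"

definition dist_le :: "'a graph \<Rightarrow> nat \<Rightarrow> 'a \<Rightarrow> 'a \<Rightarrow> bool" where
  "dist_le G i u v \<longleftrightarrow> (\<exists>xs. walk G xs \<and> hd xs = u \<and> last xs = v \<and> length xs \<le> Suc i)"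

definition packing :: "'a graph \<Rightarrow> nat \<Rightarrow> 'a set \<Rightarrow> bool" where
  "packing G i S \<longleftrightarrow> S \<subseteq> verts G \<and>
     (\<forall>u\<in>S. \<forall>v\<in>S. u \<noteq> v \<longrightarrow> \<not> dist_le G i u v)"

definition packing_coloring :: "'a graph \<Rightarrow> nat \<Rightarrow> ('a \<Rightarrow> nat) \<Rightarrow> bool" where
  "packing_coloring G k c \<longleftrightarrow> (\<forall>v\<in>verts G. c v \<in> {1..k}) \<and>
     (\<forall>i\<in>{1..k}. packing G i {v\<in>verts G. c v = i})"

definition packing_chromatic_number :: "'a graph \<Rightarrow> nat" where
  "packing_chromatic_number G = (LEAST k. \<exists>c. packing_coloring G k c)"

definition complete_graph :: "nat \<Rightarrow> nat graph" where
  "complete_graph n = ({0..<n}, {{i, j} | i j. i < n \<and> j < n \<and> i \<noteq> j})"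

definition path_graph :: "nat \<Rightarrow> nat graph" where
  "path_graph p = ({0..<p}, {{i, Suc i} | i. Suc i < p})"

text \<open>Neighborhood corona G * H: vertex Inl w is w in G; Inr (w, h) is vertex h of the
copy H_w of H attached to w.\<close>
definition nbh_corona :: "'a graph \<Rightarrow> 'b graph \<Rightarrow> ('a + ('a \<times> 'b)) graph" where
  "nbh_corona G H =
    (Inl ` verts G \<union> {Inr (w, h) | w h. w \<in> verts G \<and> h \<in> verts H},
     (\<lambda>e. Inl ` e) ` edges G
     \<union> {{Inr (w, h), Inr (w, h')} | w h h'. w \<in> verts G \<and> {h, h'} \<in> edges H}
     \<union> {{Inr (w, h), Inl x} | w h x. h \<in> verts H \<and> {w, x} \<in> edges G})"

text \<open>FSSD_m(G): each edge e replaced by K_{2,m}; new vertices Inr (e, j), j < m,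
adjacent exactly to the two ends of e; original edges deleted.\<close>
definition fssd :: "nat \<Rightarrow> 'a graph \<Rightarrow> ('a + ('a set \<times> nat)) graph" where
  "fssd m G =
    (Inl ` verts G \<union> {Inr (e, j) | e j. e \<in> edges G \<and> j < m},
     {{Inl x, Inr (e, j)} | x e j. e \<in> edges G \<and> j < m \<and> x \<in> e})"

end

theory Submission
  imports Defs
begin

(* Upper bound: color every subdivision vertex 1, the vertices of each copy of P_p alternately
   2 and 3, and the n vertices of K_n with 4, ..., n + 3.  The subdivision vertices form an
   independent set, and two original vertices are at distance 2 if they are adjacent in
   K_n * P_p and at distance at least 4 otherwise.

   Lower bound: let c use the colors 1, ..., n + 2.  A vertex of K_n has 3(n - 1) > n + 1
   neighbors, pairwise at distance 2, so it does not get color 1; hence the vertices of K_n,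
   pairwise at distance 2, get distinct colors and miss exactly one color u of 2, ..., n + 2.
   Comparing distances with the colors of K_n, a path vertex colored neither 1 nor u repeats
   the color, at most 3, of its own K_n vertex.  So some vertex v of the first edge of a copy of
   P_p has color 1, and its subdivision neighbors towards K_n are colored 2 and u only.  Then
   2 sits on a K_n vertex y, the subdivision vertex between v and y has color u >= 3, and the
   same holds for a second copy of P_p; the two vertices colored u are at distance 2. *)

section \<open>Walks and distances\<close>

definition adjacent :: "'a graph \<Rightarrow> 'a \<Rightarrow> 'a \<Rightarrow> bool" where
  "adjacent G a b \<longleftrightarrow> {a, b} \<in> edges G \<and> a \<in> verts G \<and> b \<in> verts G"

lemma adjacent_sym: "adjacent G a b \<Longrightarrow> adjacent G b a"
  unfolding adjacent_def by (simp add: insert_commute)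

lemma adjacent_verts: "adjacent G a b \<Longrightarrow> a \<in> verts G \<and> b \<in> verts G"
  unfolding adjacent_def by simp

lemma walk_Nil [simp]: "\<not> walk G []"
  unfolding walk_def by simp

lemma walk_singleton [simp]: "walk G [a] \<longleftrightarrow> a \<in> verts G"
  unfolding walk_def by simp

lemma walk_Cons_Cons [simp]: "walk G (a # b # xs) \<longleftrightarrow> adjacent G a b \<and> walk G (b # xs)"
  unfolding walk_def adjacent_def by (auto simp: less_Suc_eq_0_disj)

lemma walk_snoc:
  assumes "walk G xs" and "adjacent G (last xs) b"
  shows "walk G (xs @ [b])"
  using assms by (induction xs rule: induct_list012) (auto simp: adjacent_def)

lemma walk_butlast:
  assumes "walk G (xs @ [b])" and "xs \<noteq> []"
  shows "walk G xs \<and> adjacent G (last xs) b"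
  using assms by (induction xs rule: induct_list012) (auto simp: adjacent_def)

lemma dist_le_walk: "walk G xs \<Longrightarrow> dist_le G (length xs - 1) (hd xs) (last xs)"
  unfolding dist_le_def by auto

lemma dist_le_verts: "dist_le G i a b \<Longrightarrow> a \<in> verts G \<and> b \<in> verts G"
  unfolding dist_le_def walk_def by auto

lemma dist_le_mono: "dist_le G i a b \<Longrightarrow> i \<le> j \<Longrightarrow> dist_le G j a b"
  unfolding dist_le_def by auto

lemma dist_le_0_iff: "dist_le G 0 a b \<longleftrightarrow> a = b \<and> a \<in> verts G"
proof
  assume "dist_le G 0 a b"
  then obtain xs where "walk G xs" "hd xs = a" "last xs = b" "length xs \<le> 1"
    unfolding dist_le_def by auto
  then show "a = b \<and> a \<in> verts G"
    by (cases xs) (auto simp: walk_def)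
qed (use dist_le_walk[of G "[a]"] in auto)

lemma dist_le_Suc_iff:
  "dist_le G (Suc i) a b \<longleftrightarrow> dist_le G i a b \<or> (\<exists>s. dist_le G i a s \<and> adjacent G s b)"
proof
  assume "dist_le G (Suc i) a b"
  then obtain xs where xs: "walk G xs" "hd xs = a" "last xs = b" "length xs \<le> Suc (Suc i)"
    unfolding dist_le_def by auto
  show "dist_le G i a b \<or> (\<exists>s. dist_le G i a s \<and> adjacent G s b)"
  proof (cases "length xs \<le> Suc i")
    case True
    then show ?thesis using xs unfolding dist_le_def by auto
  next
    case False
    define ys where "ys = butlast xs"
    have "xs \<noteq> []" using xs(1) by auto
    then have xs_ys: "xs = ys @ [b]" using xs(3) unfolding ys_def by (metis append_butlast_last_id)
    with False have "ys \<noteq> []" by auto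
    then have "walk G ys" "adjacent G (last ys) b" "hd ys = a" "length ys \<le> Suc i"
      using walk_butlast[of G ys b] xs xs_ys by auto
    then show ?thesis unfolding dist_le_def by blast
  qed
next
  assume "dist_le G i a b \<or> (\<exists>s. dist_le G i a s \<and> adjacent G s b)"
  then show "dist_le G (Suc i) a b"
  proof
    assume "dist_le G i a b"
    then show ?thesis by (rule dist_le_mono) simp
  next
    assume "\<exists>s. dist_le G i a s \<and> adjacent G s b"
    then obtain s xs where "walk G xs" "hd xs = a" "last xs = s" "length xs \<le> Suc i"
        "adjacent G s b"
      unfolding dist_le_def by blast
    then show ?thesis
      unfolding dist_le_def using walk_snoc[of G xs b]
      by (intro exI[of _ "xs @ [b]"]) (auto simp: hd_append)
  qed
qed

lemma dist_le_1_cases: "dist_le G 1 a b \<Longrightarrow> a = b \<or> adjacent G a b"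
  by (auto simp: dist_le_Suc_iff dist_le_0_iff)

lemma dist_le_3_cases:
  assumes "dist_le G 3 a b"
  shows "a = b \<or> adjacent G a b \<or> (\<exists>s. adjacent G a s \<and> adjacent G s b)
    \<or> (\<exists>s t. adjacent G a s \<and> adjacent G s t \<and> adjacent G t b)"
  using assms by (auto simp: numeral_3_eq_3 dist_le_Suc_iff dist_le_0_iff)

lemma packing_coloring_mono:
  assumes "packing_coloring G k c" and "k \<le> k'"
  shows "packing_coloring G k' c"
proof -
  have "c v \<le> k" if "v \<in> verts G" for v
    using assms(1) that unfolding packing_coloring_def by auto
  then have "packing G i {v \<in> verts G. c v = i}" if "k < i" for i
    using that unfolding packing_def by fastforce
  then show ?thesis
    using assms unfolding packing_coloring_def by (meson atLeastAtMost_iff le_trans not_le)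
qed

lemma packing_coloring_dist_le:
  assumes "packing_coloring G k c" and "dist_le G d a b" and "d \<le> c a" and "a \<noteq> b"
  shows "c a \<noteq> c b"
proof
  assume same: "c a = c b"
  have verts: "a \<in> verts G" "b \<in> verts G" using dist_le_verts[OF assms(2)] by auto
  then have "packing G (c a) {v \<in> verts G. c v = c a}"
    using assms(1) unfolding packing_coloring_def by auto
  then show False
    using verts same assms(4) dist_le_mono[OF assms(2,3)] unfolding packing_def by auto
qed

lemma packing_chromatic_number_eqI:
  assumes "packing_coloring G (Suc k) c" and "\<And>c. \<not> packing_coloring G k c"
  shows "packing_chromatic_number G = Suc k"
  unfolding packing_chromatic_number_def
proof (rule Least_equality)
  show "\<exists>c. packing_coloring G (Suc k) c" using assms(1) by blast
next
  fix k' assume "\<exists>c. packing_coloring G k' c"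
  then show "Suc k \<le> k'"
    using assms(2) packing_coloring_mono by (metis not_less_eq_eq)
qed

lemma verts_fssd: "verts (fssd m G) = Inl ` verts G \<union> {Inr (e, j) | e j. e \<in> edges G \<and> j < m}"
  by (simp add: fssd_def verts_def edges_def)

lemma edges_fssd: "edges (fssd m G) = {{Inl x, Inr (e, j)} | x e j. e \<in> edges G \<and> j < m \<and> x \<in> e}"
  by (simp add: fssd_def edges_def)

lemma verts_fssd_Inl [simp]: "Inl v \<in> verts (fssd m G) \<longleftrightarrow> v \<in> verts G"
  by (auto simp: verts_fssd)

lemma verts_fssd_Inr [simp]: "Inr (e, j) \<in> verts (fssd m G) \<longleftrightarrow> e \<in> edges G \<and> j < m"
  by (auto simp: verts_fssd)

lemma adjacent_fssd_Inl_Inl [simp]: "\<not> adjacent (fssd m G) (Inl u) (Inl v)"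
  by (auto simp: adjacent_def edges_fssd doubleton_eq_iff)

lemma adjacent_fssd_Inr_Inr [simp]: "\<not> adjacent (fssd m G) (Inr x) (Inr y)"
  by (auto simp: adjacent_def edges_fssd doubleton_eq_iff)

lemma adjacent_fssd_Inl_Inr [simp]:
  "adjacent (fssd m G) (Inl v) (Inr (e, j)) \<longleftrightarrow> e \<in> edges G \<and> j < m \<and> v \<in> e \<and> v \<in> verts G"
  by (auto simp: adjacent_def edges_fssd doubleton_eq_iff)

lemma adjacent_fssd_Inr_Inl [simp]:
  "adjacent (fssd m G) (Inr (e, j)) (Inl v) \<longleftrightarrow> e \<in> edges G \<and> j < m \<and> v \<in> e \<and> v \<in> verts G"
  using adjacent_sym adjacent_fssd_Inl_Inr by metis

lemma adjacent_fssd_irrefl: "\<not> adjacent (fssd m G) v v"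
  by (cases v) auto

(* FSSD_m(G) is bipartite with the original vertices on one side. *)

lemma dist_le_3_fssd_Inl:
  assumes "dist_le (fssd m G) 3 (Inl a) (Inl b)" and "a \<noteq> b"
  shows "\<exists>e \<in> edges G. a \<in> e \<and> b \<in> e"
proof -
  have "\<not> adjacent (fssd m G) (Inl a) s \<or> \<not> adjacent (fssd m G) s t
      \<or> \<not> adjacent (fssd m G) t (Inl b)" for s t
    by (cases s; cases t) auto
  then obtain s where s: "adjacent (fssd m G) (Inl a) s" "adjacent (fssd m G) s (Inl b)"
    using dist_le_3_cases[OF assms(1)] assms(2) by auto
  then obtain e j where "s = Inr (e, j)"
    by (metis adjacent_fssd_Inl_Inl sum.exhaust prod.exhaust)
  with s show ?thesis by auto
qed

lemma verts_nbh_corona: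
  "verts (nbh_corona G H) = Inl ` verts G \<union> {Inr (w, h) | w h. w \<in> verts G \<and> h \<in> verts H}"
  by (simp add: nbh_corona_def verts_def)

lemma edges_nbh_corona:
  "edges (nbh_corona G H) = (\<lambda>e. Inl ` e) ` edges G
     \<union> {{Inr (w, h), Inr (w, h')} | w h h'. w \<in> verts G \<and> {h, h'} \<in> edges H}
     \<union> {{Inr (w, h), Inl x} | w h x. h \<in> verts H \<and> {w, x} \<in> edges G}"
  by (simp add: nbh_corona_def edges_def)

lemma nbh_corona_verts_Inl [simp]: "Inl x \<in> verts (nbh_corona G H) \<longleftrightarrow> x \<in> verts G"
  by (auto simp: verts_nbh_corona)

lemma nbh_corona_verts_Inr [simp]:
  "Inr (w, h) \<in> verts (nbh_corona G H) \<longleftrightarrow> w \<in> verts G \<and> h \<in> verts H"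
  by (auto simp: verts_nbh_corona)

lemma nbh_corona_edge_Inl_Inl [simp]:
  "{Inl x, Inl y} \<in> edges (nbh_corona G H) \<longleftrightarrow> {x, y} \<in> edges G"
proof
  assume "{Inl x, Inl y} \<in> edges (nbh_corona G H)"
  then obtain e where "e \<in> edges G" "{Inl x, Inl y} = (Inl ` e :: ('a + 'a \<times> 'b) set)"
    by (auto simp: edges_nbh_corona doubleton_eq_iff)
  moreover have "{Inl x, Inl y} = (Inl ` {x, y} :: ('a + 'a \<times> 'b) set)" by simp
  ultimately show "{x, y} \<in> edges G"
    by (metis inj_Inl inj_image_eq_iff)
next
  assume "{x, y} \<in> edges G"
  then have "Inl ` {x, y} \<in> edges (nbh_corona G H)"
    unfolding edges_nbh_corona by blast
  then show "{Inl x, Inl y} \<in> edges (nbh_corona G H)" by simp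
qed

lemma nbh_corona_edge_Inr_Inl [simp]:
  "{Inr (w, h), Inl x} \<in> edges (nbh_corona G H) \<longleftrightarrow> h \<in> verts H \<and> {w, x} \<in> edges G"
  by (auto simp: edges_nbh_corona doubleton_eq_iff)

lemma nbh_corona_edge_Inr_Inr [simp]:
  "{Inr (w, h), Inr (w', h')} \<in> edges (nbh_corona G H) \<longleftrightarrow>
     w = w' \<and> w \<in> verts G \<and> {h, h'} \<in> edges H"
proof
  assume "{Inr (w, h), Inr (w', h')} \<in> edges (nbh_corona G H)"
  then show "w = w' \<and> w \<in> verts G \<and> {h, h'} \<in> edges H"
    by (auto simp: edges_nbh_corona doubleton_eq_iff insert_commute)
next
  assume "w = w' \<and> w \<in> verts G \<and> {h, h'} \<in> edges H"
  then show "{Inr (w, h), Inr (w', h')} \<in> edges (nbh_corona G H)"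
    unfolding edges_nbh_corona by blast
qed

lemma nbh_corona_edge_Inr_Inr_E:
  assumes "e \<in> edges (nbh_corona G H)" "Inr (w, h) \<in> e" "Inr (w', h') \<in> e"
    and "(w, h) \<noteq> (w', h')"
  shows "w = w' \<and> {h, h'} \<in> edges H"
  using assms by (auto simp: edges_nbh_corona insert_commute)

lemma verts_complete_graph [simp]: "verts (complete_graph n) = {..<n}"
  unfolding complete_graph_def verts_def by auto

lemma edges_complete_graph [simp]:
  "{x, y} \<in> edges (complete_graph n) \<longleftrightarrow> x < n \<and> y < n \<and> x \<noteq> y"
  unfolding complete_graph_def edges_def by (auto simp: doubleton_eq_iff)

lemma verts_path_graph [simp]: "verts (path_graph p) = {..<p}"
  unfolding path_graph_def verts_def by auto

lemma edges_path_graph [simp]: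
  "{h, h'} \<in> edges (path_graph p) \<longleftrightarrow> (h' = Suc h \<and> h' < p \<or> h = Suc h' \<and> h < p)"
  unfolding path_graph_def edges_def by (auto simp: doubleton_eq_iff)

type_synonym corona_vertex = "(nat + nat \<times> nat) + (nat + nat \<times> nat) set \<times> nat"

abbreviation fssd_corona :: "nat \<Rightarrow> nat \<Rightarrow> nat \<Rightarrow> corona_vertex graph" where
  "fssd_corona n p m \<equiv> fssd m (nbh_corona (complete_graph n) (path_graph p))"

(* kvert w is vertex w of K_n and pvert w h is vertex h of the copy of P_p attached to w;
   mid_kk, mid_pk and mid_pp are the first vertices subdividing the edge between kvert x and
   kvert y, between pvert w h and kvert x, and between pvert w 0 and pvert w 1. *)

abbreviation kvert :: "nat \<Rightarrow> corona_vertex" where "kvert w \<equiv> Inl (Inl w)"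
abbreviation pvert :: "nat \<Rightarrow> nat \<Rightarrow> corona_vertex" where "pvert w h \<equiv> Inl (Inr (w, h))"
abbreviation mid_kk :: "nat \<Rightarrow> nat \<Rightarrow> corona_vertex" where "mid_kk x y \<equiv> Inr ({Inl x, Inl y}, 0)"
abbreviation mid_pk :: "nat \<Rightarrow> nat \<Rightarrow> nat \<Rightarrow> corona_vertex" where
  "mid_pk w h x \<equiv> Inr ({Inr (w, h), Inl x}, 0)"
abbreviation mid_pp :: "nat \<Rightarrow> corona_vertex" where "mid_pp w \<equiv> Inr ({Inr (w, 0), Inr (w, 1)}, 0)"

section \<open>A packing coloring with n + 3 colors\<close>

definition corona_coloring :: "corona_vertex \<Rightarrow> nat" where
  "corona_coloring v = (case v of
       Inl (Inl w) \<Rightarrow> w + 4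
     | Inl (Inr (w, h)) \<Rightarrow> if even h then 2 else 3
     | Inr _ \<Rightarrow> 1)"

lemma corona_coloring_cases:
  obtains (subdivision) y where "v = Inr y" "corona_coloring v = 1"
  | (path) w h where "v = pvert w h" "corona_coloring v = (if even h then 2 else 3)"
  | (complete) w where "v = kvert w" "corona_coloring v = w + 4"
proof (cases v)
  case (Inr y)
  then show ?thesis using subdivision by (simp add: corona_coloring_def)
next
  case (Inl x)
  show ?thesis
  proof (cases x)
    case (Inl w)
    then show ?thesis using \<open>v = Inl x\<close> complete by (simp add: corona_coloring_def)
  next
    case (Inr q)
    then obtain w h where "x = Inr (w, h)" by (cases q) auto
    then show ?thesis using \<open>v = Inl x\<close> path by (simp add: corona_coloring_def)
  qed
qed

lemma corona_coloring_class_far: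
  assumes "corona_coloring a = i" and "corona_coloring b = i" and "a \<noteq> b"
  shows "\<not> dist_le (fssd_corona n p m) i a b"
proof
  assume dist: "dist_le (fssd_corona n p m) i a b"
  show False
  proof (cases a rule: corona_coloring_cases)
    case (subdivision y)
    then obtain z where b: "b = Inr z"
      using assms by (cases b rule: corona_coloring_cases) (auto split: if_splits)
    have "i = 1" using subdivision(2) assms(1) by simp
    with dist have "dist_le (fssd_corona n p m) 1 a b" by simp
    from dist_le_1_cases[OF this] show False using subdivision(1) b assms(3) by simp
  next
    case (path w h)
    then obtain w' h' where b: "b = pvert w' h'" "even h' \<longleftrightarrow> even h"
      using assms(1,2) by (cases b rule: corona_coloring_cases) (auto split: if_splits)
    have "i \<le> 3" using path assms(1) by (simp split: if_splits)
    with dist have "dist_le (fssd_corona n p m) 3 (pvert w h) (pvert w' h')"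
      unfolding path(1) b(1) by (rule dist_le_mono)
    moreover have ne: "(w, h) \<noteq> (w', h')" using path(1) b(1) assms(3) by auto
    ultimately obtain e where e: "e \<in> edges (nbh_corona (complete_graph n) (path_graph p))"
        "Inr (w, h) \<in> e" "Inr (w', h') \<in> e"
      using dist_le_3_fssd_Inl by (metis sum.inject(2))
    have "{h, h'} \<in> edges (path_graph p)"
      using nbh_corona_edge_Inr_Inr_E[OF e ne] by simp
    then show False using b(2) by auto
  next
    case (complete w)
    then show False using assms by (cases b rule: corona_coloring_cases) (auto split: if_splits)
  qed
qed

lemma packing_coloring_fssd_corona:
  "packing_coloring (fssd_corona n p m) (n + 3) corona_coloring"
proof -
  have "corona_coloring v \<in> {1..n + 3}" if "v \<in> verts (fssd_corona n p m)" for v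
    using that by (cases v rule: corona_coloring_cases) auto
  then show ?thesis
    unfolding packing_coloring_def packing_def using corona_coloring_class_far by blast
qed

section \<open>No packing coloring with n + 2 colors\<close>

lemma ex_less_notin:
  assumes "finite S" and "card S < n"
  shows "\<exists>x < n. x \<notin> S"
proof (rule ccontr)
  assume "\<not> (\<exists>x < n. x \<notin> S)"
  then have "{..<n} \<subseteq> S" by auto
  then have "card {..<n} \<le> card S" by (rule card_mono[OF assms(1)])
  with assms(2) show False by simp
qed

locale small_packing_coloring =
  fixes n p m :: nat and c :: "corona_vertex \<Rightarrow> nat"
  assumes n_ge_3: "3 \<le> n" and p_ge_2: "2 \<le> p" and m_ge_1: "1 \<le> m"
    and coloring: "packing_coloring (fssd_corona n p m) (n + 2) c"
begin

abbreviation F :: "corona_vertex graph" where "F \<equiv> fssd_corona n p m"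

lemma m_pos [simp]: "0 < m" and p_pos [simp]: "0 < p" and p_gt_1 [simp]: "Suc 0 < p"
  using m_ge_1 p_ge_2 by auto

lemma color_range: "v \<in> verts F \<Longrightarrow> 1 \<le> c v \<and> c v \<le> n + 2"
  using coloring unfolding packing_coloring_def by auto

lemma walk_end_colors_differ:
  "walk F xs \<Longrightarrow> length xs - 1 \<le> c (hd xs) \<Longrightarrow> hd xs \<noteq> last xs \<Longrightarrow> c (hd xs) \<noteq> c (last xs)"
  using packing_coloring_dist_le[OF coloring dist_le_walk] .

lemma adjacent_colors_differ:
  assumes "adjacent F a b"
  shows "c a \<noteq> c b"
proof -
  have "a \<noteq> b" using assms adjacent_fssd_irrefl by metis
  moreover have "a \<in> verts F" "b \<in> verts F" using adjacent_verts[OF assms] by auto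
  ultimately show ?thesis
    using walk_end_colors_differ[of "[a, b]"] color_range[of a] assms by simp
qed

lemma color_1_vertex_neighbors_inj:
  assumes "c a = 1" and "\<And>v. v \<in> N \<Longrightarrow> adjacent F a v"
  shows "inj_on c N"
proof (rule inj_onI)
  fix v v' assume v: "v \<in> N" "v' \<in> N" "c v = c v'"
  have "c v \<noteq> 1" using adjacent_colors_differ[OF assms(2)[OF v(1)]] assms(1) by simp
  moreover have "v \<in> verts F" using adjacent_verts[OF assms(2)[OF v(1)]] by simp
  ultimately have "2 \<le> c v" using color_range by fastforce
  moreover have "walk F [v, a, v']"
    using assms(2)[OF v(1)] assms(2)[OF v(2)] adjacent_verts[OF assms(2)[OF v(2)]]
    by (auto intro: adjacent_sym)
  ultimately show "v = v'" using walk_end_colors_differ[of "[v, a, v']"] v(3) by auto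
qed

lemma kvert_color_ne_1:
  assumes "w < n"
  shows "c (kvert w) \<noteq> 1"
proof
  assume c1: "c (kvert w) = 1"
  define A where "A = ({..<n} - {w}) \<times> {..<3::nat}"
  define nb where "nb = (\<lambda>(x, k). if k = 0 then mid_kk w x else mid_pk x (k - 1) w)"
  have adj: "adjacent F (kvert w) v" if "v \<in> nb ` A" for v
    using that assms p_ge_2 by (auto simp: A_def nb_def split: if_splits)
  have "inj_on nb A"
    by (rule inj_onI) (auto simp: A_def nb_def doubleton_eq_iff split: if_splits)
  moreover have "inj_on c (nb ` A)" using color_1_vertex_neighbors_inj[OF c1 adj] .
  ultimately have inj: "inj_on (c \<circ> nb) A" by (rule comp_inj_on)
  have "(c \<circ> nb) ` A \<subseteq> {2..n + 2}"
  proof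
    fix k assume "k \<in> (c \<circ> nb) ` A"
    then obtain v where v: "v \<in> nb ` A" "k = c v" by auto
    have "c v \<noteq> 1" using adjacent_colors_differ[OF adj[OF v(1)]] c1 by simp
    moreover have "v \<in> verts F" using adjacent_verts[OF adj[OF v(1)]] by simp
    ultimately show "k \<in> {2..n + 2}" using color_range v(2) by fastforce
  qed
  then have "card A \<le> card {2..n + 2}" using card_inj_on_le[OF inj] by blast
  moreover have "card A = (n - 1) * 3" using assms by (simp add: A_def card_cartesian_product)
  ultimately show False using n_ge_3 by simp
qed

lemma kvert_color_ge_2: "w < n \<Longrightarrow> 2 \<le> c (kvert w)"
  using kvert_color_ne_1[of w] color_range[of "kvert w"] by fastforce

lemma kvert_colors_inj: "inj_on (\<lambda>w. c (kvert w)) {..<n}"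
proof (rule inj_onI)
  fix w w' assume "w \<in> {..<n}" "w' \<in> {..<n}" "c (kvert w) = c (kvert w')"
  then show "w = w'"
    using walk_end_colors_differ[of "[kvert w, mid_kk w w', kvert w']"] kvert_color_ge_2[of w]
    by auto
qed

lemma kvert_colors_miss_one: "\<exists>u \<in> {2..n + 2}. (\<lambda>w. c (kvert w)) ` {..<n} = {2..n + 2} - {u}"
proof -
  let ?K = "(\<lambda>w. c (kvert w)) ` {..<n}"
  have sub: "?K \<subseteq> {2..n + 2}"
    using kvert_color_ge_2 color_range by fastforce
  have "card ({2..n + 2} - ?K) = 1"
    using card_Diff_subset[OF _ sub] card_image[OF kvert_colors_inj] by simp
  then obtain u where "{2..n + 2} - ?K = {u}" by (rule card_1_singletonE)
  with sub show ?thesis by blast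
qed

end

locale small_packing_coloring_gap = small_packing_coloring +
  fixes u :: nat
  assumes missing_color: "u \<in> {2..n + 2}"
    and kvert_colors: "(\<lambda>w. c (kvert w)) ` {..<n} = {2..n + 2} - {u}"
begin

lemma kvert_of_color:
  assumes "k \<in> {2..n + 2}" and "k \<noteq> u"
  shows "\<exists>y < n. c (kvert y) = k"
proof -
  have "k \<in> (\<lambda>w. c (kvert w)) ` {..<n}" using assms kvert_colors by blast
  then show ?thesis by auto
qed

lemma pvert_color_eq_kvert:
  assumes "w < n" "h < p" "c (pvert w h) \<noteq> 1" "c (pvert w h) \<noteq> u"
  shows "c (pvert w h) = c (kvert w)" "c (kvert w) \<le> 3"
proof -
  have "pvert w h \<in> verts F" using assms(1,2) by simp
  then have ge2: "2 \<le> c (pvert w h)" "c (pvert w h) \<le> n + 2"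
    using color_range assms(3) by fastforce+
  then obtain y where y: "y < n" "c (kvert y) = c (pvert w h)"
    using kvert_of_color[of "c (pvert w h)"] assms(4) by auto
  have "y = w"
  proof (rule ccontr)
    assume "y \<noteq> w"
    then show False
      using walk_end_colors_differ[of "[pvert w h, mid_pk w h y, kvert y]"] assms ge2 y by simp
  qed
  with y show eq: "c (pvert w h) = c (kvert w)" by simp
  obtain x where x: "x < n" "x \<noteq> w" using ex_less_notin[of "{w}" n] n_ge_3 by auto
  show "c (kvert w) \<le> 3"
  proof (rule ccontr)
    assume "\<not> c (kvert w) \<le> 3"
    have "walk F [pvert w h, mid_pk w h x, kvert x, mid_kk x w, kvert w]"
      using assms(1,2) x by simp
    from walk_end_colors_differ[OF this] show False using eq \<open>\<not> c (kvert w) \<le> 3\<close> by simp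
  qed
qed

lemma pvert_pair_colors:
  assumes "w < n" and no_1: "\<forall>h < 2. c (pvert w h) \<noteq> 1"
  shows "\<exists>h < 2. c (pvert w h) = u" "c (kvert w) \<le> 3"
proof -
  have "pvert w 0 \<in> verts F" using assms(1) by simp
  then have "2 \<le> c (pvert w 0)" using color_range no_1 by fastforce
  moreover have "walk F [pvert w 0, mid_pp w, pvert w 1]" using assms(1) by simp
  ultimately have ne: "c (pvert w 0) \<noteq> c (pvert w 1)" using walk_end_colors_differ by fastforce
  have eq: "c (pvert w h) = c (kvert w) \<and> c (kvert w) \<le> 3" if "h < 2" "c (pvert w h) \<noteq> u" for h
    using pvert_color_eq_kvert[of w h] no_1[rule_format, OF that(1)] assms(1) that p_ge_2 by simp
  show "\<exists>h < 2. c (pvert w h) = u" using eq[of 0] eq[of 1] ne by force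
  show "c (kvert w) \<le> 3" using eq[of 0] eq[of 1] ne by force
qed

lemma ex_pvert_color_1: "\<exists>w < n. \<exists>h < 2. c (pvert w h) = 1"
proof (rule ccontr)
  assume no_1: "\<not> (\<exists>w < n. \<exists>h < 2. c (pvert w h) = 1)"
  have "c (kvert w) \<le> 3" if "w < n" for w
    using pvert_pair_colors(2)[OF that] no_1 that by blast
  then have "(\<lambda>w. c (kvert w)) ` {..<n} \<subseteq> {2..3}" using kvert_color_ge_2 by auto
  then have "card {..<n} \<le> card {2..3::nat}"
    using card_inj_on_le[OF kvert_colors_inj] by blast
  then show False using n_ge_3 by simp
qed

lemma mid_pk_color:
  assumes "w < n" "h < 2" "c (pvert w h) = 1" "x < n" "x \<noteq> w"
  shows "c (mid_pk w h x) \<in> {2, u}" "c (mid_pk w h x) \<noteq> c (kvert x)"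
proof -
  have adj: "adjacent F (pvert w h) (mid_pk w h x)" "adjacent F (mid_pk w h x) (kvert x)"
    using assms p_ge_2 by auto
  show "c (mid_pk w h x) \<noteq> c (kvert x)" using adj(2) by (rule adjacent_colors_differ)
  have "c (mid_pk w h x) \<noteq> 1" using adjacent_colors_differ[OF adj(1)] assms(3) by simp
  then have range: "3 \<le> c (mid_pk w h x)" "c (mid_pk w h x) \<le> n + 2"
    if "c (mid_pk w h x) \<notin> {2, u}"
    using that color_range adjacent_verts[OF adj(2)] by fastforce+
  show "c (mid_pk w h x) \<in> {2, u}"
  proof (rule ccontr)
    assume not_2u: "c (mid_pk w h x) \<notin> {2, u}"
    then obtain y where y: "y < n" "c (kvert y) = c (mid_pk w h x)"
      using kvert_of_color[of "c (mid_pk w h x)"] range by auto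
    have "y \<noteq> x" using y \<open>c (mid_pk w h x) \<noteq> c (kvert x)\<close> by auto
    show False
    proof (cases "y = w")
      case True
      have "walk F [mid_pk w h x, kvert x, mid_kk x w, kvert w]" using assms p_ge_2 by simp
      from walk_end_colors_differ[OF this] show False using range[OF not_2u] y True by simp
    next
      case False
      have "walk F [mid_pk w h x, pvert w h, mid_pk w h y, kvert y]"
        using assms p_ge_2 y(1) False by simp
      from walk_end_colors_differ[OF this] show False using range[OF not_2u] y by simp
    qed
  qed
qed

lemma mid_pp_color:
  assumes "w < n" "c (mid_pp w) \<notin> {1, 2, u}"
  shows "c (mid_pp w) = c (kvert w)"
proof -
  have "mid_pp w \<in> verts F" using assms(1) by simp
  then have range: "3 \<le> c (mid_pp w)" "c (mid_pp w) \<le> n + 2"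
    using color_range assms(2) by fastforce+
  then obtain y where y: "y < n" "c (kvert y) = c (mid_pp w)"
    using kvert_of_color[of "c (mid_pp w)"] assms(2) by auto
  have "y = w"
  proof (rule ccontr)
    assume "y \<noteq> w"
    then have "walk F [mid_pp w, pvert w 0, mid_pk w 0 y, kvert y]" using assms(1) y(1) by simp
    from walk_end_colors_differ[OF this] show False using range y by simp
  qed
  with y show ?thesis by simp
qed

lemma pvert_color_1_ne_2:
  assumes "w < n" "h < 2" "c (pvert w h) = 1"
  shows "u \<noteq> 2" "c (kvert w) \<noteq> 2"
proof -
  obtain x where x: "x < n" "x \<noteq> w" using ex_less_notin[of "{w}" n] n_ge_3 by auto
  have "card {w, x} < n" using n_ge_3 by (simp add: card_insert_if)
  then obtain x' where x': "x' < n" "x' \<noteq> w" "x' \<noteq> x"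
    using ex_less_notin[of "{w, x}" n] by auto
  let ?N = "{mid_pk w h x, mid_pk w h x', mid_pp w}"
  have adj: "adjacent F (pvert w h) v" if "v \<in> ?N" for v
    using that assms(1,2) x x' p_ge_2 by auto
  then have inj: "inj_on c ?N" by (rule color_1_vertex_neighbors_inj[OF assms(3)])
  have "mid_pk w h x \<noteq> mid_pk w h x'" using x'(3) by (auto simp: doubleton_eq_iff)
  then have distinct: "c (mid_pk w h x) \<noteq> c (mid_pk w h x')"
      "c (mid_pp w) \<noteq> c (mid_pk w h x)" "c (mid_pp w) \<noteq> c (mid_pk w h x')"
    using inj_on_contraD[OF inj, of "mid_pk w h x" "mid_pk w h x'"]
      inj_on_contraD[OF inj, of "mid_pp w" "mid_pk w h x"]
      inj_on_contraD[OF inj, of "mid_pp w" "mid_pk w h x'"]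
    by (auto simp: doubleton_eq_iff)
  have "c (mid_pk w h x) \<in> {2, u}" "c (mid_pk w h x') \<in> {2, u}"
    using mid_pk_color(1) assms x x' by auto
  with distinct show "u \<noteq> 2" by auto
  have "c (mid_pp w) \<noteq> 1"
    using adjacent_colors_differ[OF adj[of "mid_pp w"]] assms(3) by simp
  then have "c (mid_pp w) \<notin> {1, 2, u}"
    using distinct \<open>c (mid_pk w h x) \<in> {2, u}\<close> \<open>c (mid_pk w h x') \<in> {2, u}\<close> by auto
  then show "c (kvert w) \<noteq> 2" using mid_pp_color[OF assms(1)] by force
qed

lemma mid_pk_color_missing:
  assumes "w < n" "h < 2" "c (pvert w h) = 1" "y < n" "c (kvert y) = 2"
  shows "y \<noteq> w" "c (mid_pk w h y) = u"
proof -
  show "y \<noteq> w" using pvert_color_1_ne_2(2)[OF assms(1-3)] assms(5) by auto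
  then show "c (mid_pk w h y) = u" using mid_pk_color[OF assms(1-4)] assms(5) by auto
qed

lemma no_small_packing_coloring: False
proof -
  obtain w h where wh: "w < n" "h < 2" "c (pvert w h) = 1" using ex_pvert_color_1 by blast
  have "u \<noteq> 2" using pvert_color_1_ne_2(1)[OF wh] .
  then have u3: "3 \<le> u" using missing_color by simp
  obtain y where y: "y < n" "c (kvert y) = 2"
    using kvert_of_color[of 2] \<open>u \<noteq> 2\<close> by auto
  have yw: "y \<noteq> w" and wy_u: "c (mid_pk w h y) = u" using mid_pk_color_missing[OF wh y] by auto
  have "card {w, y} < n" using n_ge_3 by (simp add: card_insert_if)
  then obtain x where x: "x < n" "x \<noteq> w" "x \<noteq> y"
    using ex_less_notin[of "{w, y}" n] by auto
  have not_u: "c (pvert x h') \<noteq> u" if "h' < 2" for h'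
  proof -
    have "walk F [mid_pk w h y, kvert y, mid_pk x h' y, pvert x h']"
      using wh(1,2) y(1) x yw that p_ge_2 by simp
    from walk_end_colors_differ[OF this] show ?thesis using wy_u u3 by simp
  qed
  obtain h' where h': "h' < 2" "c (pvert x h') = 1"
    using pvert_pair_colors(1)[OF x(1)] not_u by blast
  have xy_u: "c (mid_pk x h' y) = u" using mid_pk_color_missing[OF x(1) h' y] by simp
  have "walk F [mid_pk w h y, kvert y, mid_pk x h' y]"
    using wh(1,2) y(1) x yw h'(1) p_ge_2 by simp
  moreover have "mid_pk w h y \<noteq> mid_pk x h' y" using x(2) by (auto simp: doubleton_eq_iff)
  ultimately show False using walk_end_colors_differ wy_u xy_u u3 by fastforce
qed

end

lemma not_packing_coloring_fssd_corona:
  assumes "3 \<le> n" and "2 \<le> p" and "1 \<le> m"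
  shows "\<not> packing_coloring (fssd_corona n p m) (n + 2) c"
proof
  assume "packing_coloring (fssd_corona n p m) (n + 2) c"
  with assms interpret small_packing_coloring n p m c by unfold_locales
  obtain u where "u \<in> {2..n + 2}" "(\<lambda>w. c (kvert w)) ` {..<n} = {2..n + 2} - {u}"
    using kvert_colors_miss_one by blast
  then interpret small_packing_coloring_gap n p m c u by unfold_locales
  show False by (rule no_small_packing_coloring)
qed

theorem theorem1:
  fixes n p m :: nat
  assumes "n \<ge> 3" and "p \<ge> 2" and "m \<ge> 1"
  shows "packing_chromatic_number (fssd m (nbh_corona (complete_graph n) (path_graph p))) = n + 3"
proof -
  have "packing_chromatic_number (fssd_corona n p m) = Suc (n + 2)"
  proof (rule packing_chromatic_number_eqI)
    show "packing_coloring (fssd_corona n p m) (Suc (n + 2)) corona_coloring"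
      using packing_coloring_fssd_corona[where n = n] by (simp add: numeral_eq_Suc)
    show "\<not> packing_coloring (fssd_corona n p m) (n + 2) c" for c
      using not_packing_coloring_fssd_corona assms by simp
  qed
  then show ?thesis by simp
qed

end
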